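(* Assume each $f_i$ is $\mu$-strongly convex with $\mu>0$ and has $L$-Lipschitz gradient, let $x^*$ be the minimiser of $F=f+h$, and run SAGA with step size $\gamma=\frac{1}{3L}$ starting from $x^0$ with $\phi_i^0=x^0$ for all $i$. Then for all $k\ge 0$, \[ \mathbb{E}\Vert x^{k}-x^{*}\Vert^{2}\leq \left( 1-\min\left\{ \frac{1}{4n},\frac{\mu}{3L}\right\} \right)^{k} \left[\Vert x^{0}-x^{*}\Vert^{2} +\frac{2n}{3L} \left[f(x^{0}) -\langle f'(x^{*}),x^{0}-x^{*}\rangle -f(x^{*})\right]\right], \] where the expectation is over all random index choices up to step $k$.
   Context: Setting: $f(x)=\frac1n\sum_{i=1}^n f_i(x)$ with each $f_i\colon\mathbb{R}^d\to\mathbb{R}$ convex and differentiable with $L$-Lipschitz gradient $f_i'$; $h\colon\mathbb{R}^d\to\mathbb{R}\cup\{+\infty\}$ is proper, closed, convex; $F=f+h$. The proximal operator is $\mathrm{prox}^h_\gamma(y)=\operatorname{argmin}_{x}\{h(x)+\frac{1}{2\gamma}\Vert x-y\Vert^2\}$. SAGA algorithm with step size $\gamma>0$: start from $x^0\in\mathbb{R}^d$ and $\phi_i^0=x^0$ for all $i$. At iteration $k+1$, given $x^k$ and $\phi_1^k,\dots,\phi_n^k$: pick $j$ uniformly at random from $\{1,\dots,n\}$ (independently of the past); set $\phi_j^{k+1}=x^k$ and $\phi_i^{k+1}=\phi_i^k$ for $i\neq j$; set $w^{k+1}=x^k-\gamma\big[f_j'(\phi_j^{k+1})-f_j'(\phi_j^k)+\frac1n\sum_{i=1}^n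 f_i'(\phi_i^k)\big]$ and $x^{k+1}=\mathrm{prox}^h_\gamma(w^{k+1})$. *)

theory Defs
  imports "HOL-Analysis.Analysis"
begin

definition strongly_convex_grad :: "real \<Rightarrow> ('a::real_inner \<Rightarrow> real) \<Rightarrow> ('a \<Rightarrow> 'a) \<Rightarrow> bool" where
  "strongly_convex_grad \<mu> g g' \<longleftrightarrow>
     (\<forall>x y. g y \<ge> g x + inner (g' x) (y - x) + \<mu> / 2 * (norm (y - x))\<^sup>2)"

definition epigraph_ext :: "('a \<Rightarrow> ereal) \<Rightarrow> ('a \<times> real) set" where
  "epigraph_ext h = {(x, t). h x \<le> ereal t}"

definition proper_fun :: "('a \<Rightarrow> ereal) \<Rightarrow> bool" where
  "proper_fun h \<longleftrightarrow> (\<forall>x. h x \<noteq> -\<infinity>) \<and> (\<exists>x. h x \<noteq> \<infinity>)"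

definition closed_fun :: "('a::topological_space \<Rightarrow> ereal) \<Rightarrow> bool" where
  "closed_fun h \<longleftrightarrow> closed (epigraph_ext h)"

definition convex_fun :: "('a::real_vector \<Rightarrow> ereal) \<Rightarrow> bool" where
  "convex_fun h \<longleftrightarrow> convex (epigraph_ext h)"

definition prox :: "('a::real_normed_vector \<Rightarrow> ereal) \<Rightarrow> real \<Rightarrow> 'a \<Rightarrow> 'a" where
  "prox h \<gamma> y = (SOME x. \<forall>z. h x + ereal (1 / (2 * \<gamma>) * (norm (x - y))\<^sup>2)
                              \<le> h z + ereal (1 / (2 * \<gamma>) * (norm (z - y))\<^sup>2))"

text \<open>One SAGA iteration with chosen index j (indices range over {0..<n}).
  State: (x^k, phi^k).  Note phi_j^{k+1} = x^k.\<close>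
definition saga_step :: "nat \<Rightarrow> (nat \<Rightarrow> 'a::real_normed_vector \<Rightarrow> 'a) \<Rightarrow> ('a \<Rightarrow> ereal) \<Rightarrow> real
     \<Rightarrow> 'a \<times> (nat \<Rightarrow> 'a) \<Rightarrow> nat \<Rightarrow> 'a \<times> (nat \<Rightarrow> 'a)" where
  "saga_step n f' h \<gamma> st j =
     (let x = fst st; \<phi> = snd st; \<phi>' = \<phi>(j := x);
          w = x - \<gamma> *\<^sub>R (f' j (\<phi>' j) - f' j (\<phi> j) + (1 / real n) *\<^sub>R (\<Sum>i<n. f' i (\<phi> i)))
      in (prox h \<gamma> w, \<phi>'))"

definition saga_iter :: "nat \<Rightarrow> (nat \<Rightarrow> 'a::real_normed_vector \<Rightarrow> 'a) \<Rightarrow> ('a \<Rightarrow> ereal) \<Rightarrow> real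
     \<Rightarrow> 'a \<Rightarrow> nat list \<Rightarrow> 'a" where
  "saga_iter n f' h \<gamma> x0 js = fst (foldl (saga_step n f' h \<gamma>) (x0, \<lambda>_. x0) js)"

text \<open>Expectation over k i.i.d. uniform indices in {0..<n}: average over all index sequences.\<close>
definition index_seqs :: "nat \<Rightarrow> nat \<Rightarrow> nat list set" where
  "index_seqs n k = {js. length js = k \<and> set js \<subseteq> {..<n}}"

definition expect_seq :: "nat \<Rightarrow> nat \<Rightarrow> (nat list \<Rightarrow> real) \<Rightarrow> real" where
  "expect_seq n k X = (\<Sum>js\<in>index_seqs n k. X js) / real n ^ k"

end

theory Submission
  imports Defs
begin

text \<open>The proof is the Lyapunov argument of Defazio, Bach and Lacoste-Julien.  With xs the
  minimiser of F = f + h, gamma = 1/(3L), the Bregman divergences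
  D_i(y) = f_i(y) - f_i(xs) - \<langle>f_i'(xs), y - xs\<rangle> \<ge> 0 and c = 2 n gamma (1 - gamma mu),
  the function
      T(x, phi) = |x - xs|^2 + (c/n) sum_i D_i(phi_i)
  decreases in expectation by the factor rho = 1 - min(1/(4n), mu/(3L)) in every step.  The theorem
     follows since |x - xs|^2 \<le> T and T at the start is at most the claimed constant.\<close>

lemma norm_add_square:
  "(norm (a + b))\<^sup>2 = (norm a)\<^sup>2 + 2 * inner a b + (norm (b::'a::real_inner))\<^sup>2"
  by (simp add: power2_norm_eq_inner inner_add_left inner_add_right inner_commute)

lemma smooth_upper_bound:
  fixes F :: "'a::real_inner \<Rightarrow> real" and F' :: "'a \<Rightarrow> 'a"
  assumes deriv: "\<And>x. (F has_derivative (\<lambda>v. inner (F' x) v)) (at x)"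
    and lip: "\<And>x y. norm (F' x - F' y) \<le> L * norm (x - y)"
  shows "F y \<le> F x + inner (F' x) (y - x) + L / 2 * (norm (y - x))\<^sup>2"
proof -
  define v where "v = y - x"
  define g where "g t = F (x + t *\<^sub>R v) - t * inner (F' x) v - L / 2 * t\<^sup>2 * (norm v)\<^sup>2" for t
  have "g 1 \<le> g 0"
  proof (rule DERIV_nonpos_imp_nonincreasing[of 0 1 g])
    fix t :: real assume t: "0 \<le> t" "t \<le> 1"
    have "((\<lambda>t. x + t *\<^sub>R v) has_derivative (\<lambda>s. s *\<^sub>R v)) (at t)"
      by (auto intro!: derivative_eq_intros)
    from has_derivative_compose[OF this deriv]
    have "((\<lambda>t. F (x + t *\<^sub>R v)) has_real_derivative inner (F' (x + t *\<^sub>R v)) v) (at t)"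
      by (simp add: has_field_derivative_def mult_commute_abs)
    hence "(g has_real_derivative
              inner (F' (x + t *\<^sub>R v)) v - inner (F' x) v - L * t * (norm v)\<^sup>2) (at t)"
      unfolding g_def by (auto intro!: derivative_eq_intros)
    moreover have "inner (F' (x + t *\<^sub>R v)) v - inner (F' x) v \<le> L * t * (norm v)\<^sup>2"
    proof -
      have "inner (F' (x + t *\<^sub>R v)) v - inner (F' x) v = inner (F' (x + t *\<^sub>R v) - F' x) v"
        by (simp add: inner_diff_left)
      also have "\<dots> \<le> norm (F' (x + t *\<^sub>R v) - F' x) * norm v" by (rule norm_cauchy_schwarz)
      also have "\<dots> \<le> L * norm (t *\<^sub>R v) * norm v"
        using lip[of "x + t *\<^sub>R v" x] by (simp add: mult_right_mono)
      also have "\<dots> = L * t * (norm v)\<^sup>2" using t by (simp add: power2_eq_square)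
      finally show ?thesis .
    qed
    ultimately show "\<exists>y. (g has_real_derivative y) (at t) \<and> y \<le> 0" by auto
  qed simp
  thus ?thesis unfolding g_def v_def by (simp add: algebra_simps)
qed

text \<open>Proof: compare
  the values at y and at the gradient step z = y - (1/M)(P'(y) - P'(x)).\<close>
lemma smooth_convex_gradient_gap:
  fixes P :: "'a::real_inner \<Rightarrow> real" and P' :: "'a \<Rightarrow> 'a"
  assumes M: "M > 0"
    and lower: "\<And>x y. P y \<ge> P x + inner (P' x) (y - x)"
    and upper: "\<And>x y. P y \<le> P x + inner (P' x) (y - x) + M / 2 * (norm (y - x))\<^sup>2"
  shows "P y \<ge> P x + inner (P' x) (y - x) + (norm (P' y - P' x))\<^sup>2 / (2 * M)"
proof -
  define d where "d = P' y - P' x"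
  define z where "z = y - (1 / M) *\<^sub>R d"
  have "P x + inner (P' x) (z - x) \<le> P z" by (rule lower)
  also have "\<dots> \<le> P y + inner (P' y) (z - y) + M / 2 * (norm (z - y))\<^sup>2" by (rule upper)
  finally have "P x + inner (P' x) (y - x) - (1 / M) * inner (P' x) d
      \<le> P y - (1 / M) * inner (P' y) d + (norm d)\<^sup>2 / (2 * M)"
    using M unfolding z_def
    by (simp add: inner_diff_right power_divide power2_eq_square algebra_simps)
  moreover have "(1 / M) * inner (P' y) d - (1 / M) * inner (P' x) d = (norm d)\<^sup>2 / M"
    unfolding d_def by (simp add: power2_norm_eq_inner inner_diff_left algebra_simps
        flip: add_divide_distrib diff_divide_distrib)
  ultimately show ?thesis unfolding d_def by (simp add: field_simps)
qed

lemma le_of_le_plus_vanishing: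
  fixes A B C :: real
  assumes "\<And>t. 0 < t \<Longrightarrow> t \<le> 1 \<Longrightarrow> A \<le> B + t * C"
  shows "A \<le> B"
proof (rule ccontr)
  assume AB: "\<not> A \<le> B"
  define t where "t = min 1 ((A - B) / (2 * \<bar>C\<bar> + 1))"
  have t: "0 < t" "t \<le> 1" using AB unfolding t_def by auto
  have "t * C \<le> t * \<bar>C\<bar>" using t by (simp add: mult_left_mono)
  also have "\<dots> \<le> (A - B) / (2 * \<bar>C\<bar> + 1) * \<bar>C\<bar>"
    unfolding t_def by (intro mult_right_mono) auto
  also have "\<dots> < A - B"
    using AB mult_right_mono[of B A "\<bar>C\<bar>"] by (simp add: field_simps)
  finally show False using assms[OF t] by simp
qed

text \<open>Co-coercivity of the shifted function F - (mu/2)|.|^2, which is convex and M-smooth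
  for every M \<ge> L - mu, written in terms of F: it relates the gradient monotonicity gap A,
  the Bregman divergence D, the squared distance U and the squared gradient difference Q.\<close>
lemma strongly_convex_shifted_cocoercivity:
  fixes F :: "'a::real_inner \<Rightarrow> real" and F' :: "'a \<Rightarrow> 'a"
  assumes M: "M > 0" "M \<ge> L - \<mu>"
    and strong: "\<And>x y. F y \<ge> F x + inner (F' x) (y - x) + \<mu> / 2 * (norm (y - x))\<^sup>2"
    and upper: "\<And>x y. F y \<le> F x + inner (F' x) (y - x) + L / 2 * (norm (y - x))\<^sup>2"
  shows "2 * (M + \<mu>) * inner (F' x - F' xs) (x - xs)
    \<ge> 2 * M * (F x - F xs - inner (F' xs) (x - xs)) + (M + \<mu>) * \<mu> * (norm (x - xs))\<^sup>2
      + (norm (F' x - F' xs))\<^sup>2"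
proof -
  define A where "A = inner (F' x - F' xs) (x - xs)"
  define D where "D = F x - F xs - inner (F' xs) (x - xs)"
  define U where "U = (norm (x - xs))\<^sup>2"
  define Q where "Q = (norm (F' x - F' xs))\<^sup>2"
  define H where "H z = F z - \<mu> / 2 * (norm z)\<^sup>2" for z
  define H' where "H' z = F' z - \<mu> *\<^sub>R z" for z
  have H_gap: "H y - H x - inner (H' x) (y - x)
      = F y - F x - inner (F' x) (y - x) - \<mu> / 2 * (norm (y - x))\<^sup>2" for x y
    unfolding H_def H'_def
    by (simp add: power2_norm_eq_inner inner_diff_left inner_diff_right inner_commute
        algebra_simps)
  have "H y \<ge> H x + inner (H' x) (y - x)" for x y
    using strong[where x=x and y=y] H_gap[of y x] by linarith
  moreover have "H y \<le> H x + inner (H' x) (y - x) + M / 2 * (norm (y - x))\<^sup>2" for x y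
  proof -
    have "(L - \<mu>) / 2 * (norm (y - x))\<^sup>2 \<le> M / 2 * (norm (y - x))\<^sup>2"
      using M by (intro mult_right_mono) auto
    thus ?thesis using upper[where x=x and y=y] H_gap[of y x] by (simp add: algebra_simps)
  qed
  ultimately have "H xs \<ge> H x + inner (H' x) (xs - x) + (norm (H' xs - H' x))\<^sup>2 / (2 * M)"
    by (rule smooth_convex_gradient_gap[OF M(1)])
  moreover have "H xs - H x - inner (H' x) (xs - x) = - D + A - \<mu> / 2 * U"
    unfolding H_gap A_def D_def U_def
    by (simp add: inner_diff_left inner_diff_right norm_minus_commute algebra_simps)
  moreover have "(norm (H' xs - H' x))\<^sup>2 = Q - 2 * \<mu> * A + \<mu>\<^sup>2 * U"
    unfolding Q_def A_def U_def H'_def power2_norm_eq_inner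
    by (simp add: inner_diff_left inner_diff_right inner_commute algebra_simps power2_eq_square)
  ultimately have "- D + A - \<mu> / 2 * U \<ge> (Q - 2 * \<mu> * A + \<mu>\<^sup>2 * U) / (2 * M)" by simp
  hence "2 * M * (- D + A - \<mu> / 2 * U) \<ge> Q - 2 * \<mu> * A + \<mu>\<^sup>2 * U"
    using M by (simp add: field_simps)
  thus ?thesis unfolding A_def D_def U_def Q_def by (simp add: algebra_simps power2_eq_square)
qed

text \<open>Take M = L - mu above; when mu = L, let M tend to 0.\<close>
lemma strongly_convex_gradient_inequality:
  fixes F :: "'a::real_inner \<Rightarrow> real" and F' :: "'a \<Rightarrow> 'a"
  assumes mu: "\<mu> > 0" and mu_L: "\<mu> \<le> L"
    and strong: "\<And>x y. F y \<ge> F x + inner (F' x) (y - x) + \<mu> / 2 * (norm (y - x))\<^sup>2"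
    and upper: "\<And>x y. F y \<le> F x + inner (F' x) (y - x) + L / 2 * (norm (y - x))\<^sup>2"
  shows "inner (F' x - F' xs) (x - xs) \<ge> (norm (F' x - F' xs))\<^sup>2 / (2 * L)
           + (1 - \<mu> / L) * (F x - F xs - inner (F' xs) (x - xs)) + \<mu> / 2 * (norm (x - xs))\<^sup>2"
proof -
  define A where "A = inner (F' x - F' xs) (x - xs)"
  define D where "D = F x - F xs - inner (F' xs) (x - xs)"
  define U where "U = (norm (x - xs))\<^sup>2"
  define Q where "Q = (norm (F' x - F' xs))\<^sup>2"
  have key: "2 * (M + \<mu>) * A \<ge> 2 * M * D + (M + \<mu>) * \<mu> * U + Q"
    if "M > 0" "M \<ge> L - \<mu>" for M
    unfolding A_def D_def U_def Q_def
    by (rule strongly_convex_shifted_cocoercivity[OF that strong upper])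
  have "A \<ge> Q / (2 * L) + (1 - \<mu> / L) * D + \<mu> / 2 * U"
  proof (cases "\<mu> < L")
    case True
    with key[of "L - \<mu>"] mu show ?thesis by (simp add: field_simps)
  next
    case False
    hence L: "L = \<mu>" using mu_L by simp
    have "Q + \<mu> * \<mu> * U - 2 * \<mu> * A \<le> 0 + t * (2 * A - 2 * D - \<mu> * U)"
      if "0 < t" "t \<le> 1" for t
      using key[of t] that L by (simp add: algebra_simps)
    hence "Q + \<mu> * \<mu> * U - 2 * \<mu> * A \<le> 0" by (rule le_of_le_plus_vanishing)
    thus ?thesis using L mu by (simp add: field_simps)
  qed
  thus ?thesis unfolding A_def D_def U_def Q_def .
qed

lemma convex_composite_min_first_order:
  fixes h :: "'a::real_vector \<Rightarrow> ereal" and \<Phi> :: "'a \<Rightarrow> real"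
  assumes h_convex: "convex_fun h" and hp: "h p = ereal hp" and hz: "h z = ereal r"
    and min: "\<And>y. ereal (\<Phi> p) + h p \<le> ereal (\<Phi> y) + h y"
    and expansion: "\<And>t. 0 < t \<Longrightarrow> t \<le> 1 \<Longrightarrow> \<Phi> (p + t *\<^sub>R (z - p)) \<le> \<Phi> p + t * G + t\<^sup>2 * K"
  shows "r \<ge> hp - G"
proof -
  have "hp - G - r \<le> 0 + t * K" if t: "0 < t" "t \<le> 1" for t
  proof -
    have "(p, hp) \<in> epigraph_ext h" "(z, r) \<in> epigraph_ext h"
      unfolding epigraph_ext_def using hp hz by auto
    with h_convex t have "(1 - t) *\<^sub>R (p, hp) + t *\<^sub>R (z, r) \<in> epigraph_ext h"
      unfolding convex_fun_def by (intro convexD) auto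
    hence "h (p + t *\<^sub>R (z - p)) \<le> ereal ((1 - t) * hp + t * r)"
      unfolding epigraph_ext_def by (simp add: algebra_simps)
    hence "ereal (\<Phi> p) + ereal hp \<le> ereal (\<Phi> (p + t *\<^sub>R (z - p))) + ereal ((1 - t) * hp + t * r)"
      using min[of "p + t *\<^sub>R (z - p)"] hp by (metis add_left_mono order_trans)
    hence "\<Phi> p + hp \<le> \<Phi> p + t * G + t\<^sup>2 * K + ((1 - t) * hp + t * r)"
      using expansion[OF t] by simp
    hence "t * hp \<le> t * (G + t * K + r)" by (simp add: algebra_simps power2_eq_square)
    thus ?thesis using t by simp
  qed
  hence "hp - G - r \<le> 0" by (rule le_of_le_plus_vanishing)
  thus ?thesis by simp
qed

lemma square_le_affine_bound:
  fixes r a b :: real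
  assumes "r \<ge> 0" "a \<ge> 0" "b \<ge> 0" "r\<^sup>2 \<le> a + b * r"
  shows "r \<le> 1 + a + b"
proof (cases "r \<le> 1")
  case False
  hence "r * r \<le> (a + b) * r"
    using assms mult_left_mono[of 1 r a] by (simp add: power2_eq_square algebra_simps)
  hence "r \<le> a + b" using False by simp
  thus ?thesis by simp
qed (use assms in auto)

definition prox_objective :: "('a::real_normed_vector \<Rightarrow> ereal) \<Rightarrow> real \<Rightarrow> 'a \<Rightarrow> 'a \<Rightarrow> ereal"
  where "prox_objective h \<gamma> y x = h x + ereal (1 / (2 * \<gamma>) * (norm (x - y))\<^sup>2)"

lemma prox_sublevel_bounded:
  fixes h :: "'a::real_inner \<Rightarrow> ereal"
  assumes \<gamma>: "\<gamma> > 0" and minorant: "\<And>z. ereal (c + inner g z) \<le> h z"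
  shows "bounded (epigraph_ext h \<inter> {(z, t). t + 1 / (2 * \<gamma>) * (norm (z - w))\<^sup>2 \<le> M})"
proof -
  define R where "R = 1 + 2 * \<gamma> * (\<bar>M - c\<bar> + \<bar>inner g w\<bar>) + 2 * \<gamma> * norm g"
  define lo where "lo = c - norm g * (norm w + R)"
  have "norm (z - w) \<le> R \<and> lo \<le> t \<and> t \<le> M"
    if ht: "h z \<le> ereal t" and tM: "t + 1 / (2 * \<gamma>) * (norm (z - w))\<^sup>2 \<le> M" for z t
  proof -
    have ct: "c + inner g z \<le> t" using minorant[of z] ht by (metis ereal_less_eq(3) order_trans)
    have "inner g z = inner g (z - w) + inner g w" by (simp add: inner_diff_right)
    moreover have "\<bar>inner g (z - w)\<bar> \<le> norm g * norm (z - w)" by (rule Cauchy_Schwarz_ineq2)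
    ultimately have "(norm (z - w))\<^sup>2 / (2 * \<gamma>) \<le> \<bar>M - c\<bar> + \<bar>inner g w\<bar> + norm g * norm (z - w)"
      using ct tM by auto
    hence "(norm (z - w))\<^sup>2 \<le> 2 * \<gamma> * (\<bar>M - c\<bar> + \<bar>inner g w\<bar>) + 2 * \<gamma> * norm g * norm (z - w)"
      using \<gamma> by (simp add: field_simps)
    hence zR: "norm (z - w) \<le> R"
      unfolding R_def using \<gamma> by (intro square_le_affine_bound) auto
    have "norm z \<le> norm w + R" using zR norm_triangle_sub[of z w] by (simp add: norm_minus_commute)
    hence "norm g * norm z \<le> norm g * (norm w + R)" by (simp add: mult_left_mono)
    moreover have "- inner g z \<le> norm g * norm z"
      using norm_cauchy_schwarz[of "- g" z] by simp
    moreover have "0 \<le> 1 / (2 * \<gamma>) * (norm (z - w))\<^sup>2" using \<gamma> by simp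
    hence "t \<le> M" using tM by linarith
    ultimately show ?thesis using ct zR unfolding lo_def by auto
  qed
  hence "epigraph_ext h \<inter> {(z, t). t + 1 / (2 * \<gamma>) * (norm (z - w))\<^sup>2 \<le> M} \<subseteq> cball w R \<times> {lo..M}"
    unfolding epigraph_ext_def by (auto simp: dist_norm norm_minus_commute)
  thus ?thesis by (rule bounded_subset[rotated]) (intro bounded_Times bounded_cball bounded_closed_interval)
qed

text \<open>The minimum is taken over the compact part of
  the epigraph where the objective is below its value at a point of finite h.\<close>
lemma prox_minimiser_exists:
  fixes h :: "'a::euclidean_space \<Rightarrow> ereal"
  assumes \<gamma>: "\<gamma> > 0" and proper: "proper_fun h" and closed: "closed_fun h"
    and minorant: "\<And>z. ereal (c + inner g z) \<le> h z"
  shows "\<exists>p. \<forall>z. prox_objective h \<gamma> w p \<le> prox_objective h \<gamma> w z"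
proof -
  define q where "q z = 1 / (2 * \<gamma>) * (norm (z - w))\<^sup>2" for z
  obtain z0 r0 where r0: "h z0 = ereal r0"
    using proper unfolding proper_fun_def by (metis ereal_cases)
  define K where "K = epigraph_ext h \<inter> {(z, t). t + q z \<le> r0 + q z0}"
  have cont: "continuous_on UNIV (\<lambda>zt::'a \<times> real. snd zt + q (fst zt))"
    unfolding q_def by (intro continuous_intros)
  have "{(z, t). t + q z \<le> r0 + q z0} = {zt. snd zt + q (fst zt) \<le> r0 + q z0}" by auto
  hence "closed K"
    unfolding K_def using closed closed_Collect_le[OF cont continuous_on_const]
    by (auto simp: closed_fun_def intro!: closed_Int)
  moreover have "bounded K"
    unfolding K_def q_def by (rule prox_sublevel_bounded[OF \<gamma> minorant])
  ultimately have "compact K" by (simp add: compact_eq_bounded_closed)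
  moreover have z0K: "(z0, r0) \<in> K" unfolding K_def epigraph_ext_def using r0 by simp
  ultimately obtain pt where "pt \<in> K" and "\<forall>y\<in>K. snd pt + q (fst pt) \<le> snd y + q (fst y)"
    using continuous_attains_inf[OF _ _ continuous_on_subset[OF cont]] by blast
  then obtain p tp where pK: "(p, tp) \<in> K"
    and pmin: "\<And>z t. (z, t) \<in> K \<Longrightarrow> tp + q p \<le> t + q z"
    by (metis prod.collapse fst_conv snd_conv)
  have "h p + ereal (q p) \<le> h z + ereal (q z)" for z
  proof (cases "h z")
    case (real r)
    have "h p + ereal (q p) \<le> ereal (tp + q p)"
      using pK unfolding K_def epigraph_ext_def by (simp add: add_right_mono flip: plus_ereal.simps)
    also have "\<dots> \<le> ereal (r + q z)"
      using pmin[of z r] pK real unfolding K_def epigraph_ext_def by (cases "(z, r) \<in> K") (auto simp: K_def epigraph_ext_def)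
    finally show ?thesis using real by simp
  next
    case MInf thus ?thesis using proper unfolding proper_fun_def by auto
  qed simp
  thus ?thesis unfolding prox_objective_def q_def by blast
qed

lemma prox_minimises:
  fixes h :: "'a::euclidean_space \<Rightarrow> ereal"
  assumes "\<gamma> > 0" "proper_fun h" "closed_fun h" "\<And>z. ereal (c + inner g z) \<le> h z"
  shows "prox_objective h \<gamma> w (prox h \<gamma> w) \<le> prox_objective h \<gamma> w z"
  using someI_ex[OF prox_minimiser_exists[OF assms, of w]]
  unfolding prox_def prox_objective_def by blast

lemma prox_finite:
  fixes h :: "'a::euclidean_space \<Rightarrow> ereal"
  assumes \<gamma>: "\<gamma> > 0" and proper: "proper_fun h" and closed: "closed_fun h"
    and minorant: "\<And>z. ereal (c + inner g z) \<le> h z"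
  obtains hp where "h (prox h \<gamma> w) = ereal hp"
proof -
  obtain z r where hz: "h z = ereal r"
    using proper unfolding proper_fun_def by (metis ereal_cases)
  have "h (prox h \<gamma> w) \<noteq> \<infinity>"
    using prox_minimises[OF assms, of w z] hz unfolding prox_objective_def by auto
  moreover have "h (prox h \<gamma> w) \<noteq> -\<infinity>" using proper unfolding proper_fun_def by auto
  ultimately show ?thesis using that by (cases "h (prox h \<gamma> w)") auto
qed

lemma prox_variational_inequality:
  fixes h :: "'a::euclidean_space \<Rightarrow> ereal"
  assumes \<gamma>: "\<gamma> > 0" and proper: "proper_fun h" and closed: "closed_fun h"
    and convex: "convex_fun h" and minorant: "\<And>z. ereal (c + inner g z) \<le> h z"
    and hp: "h (prox h \<gamma> w) = ereal hp" and hz: "h z = ereal r"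
  shows "r \<ge> hp - (1 / \<gamma>) * inner (prox h \<gamma> w - w) (z - prox h \<gamma> w)"
proof -
  define p where "p = prox h \<gamma> w"
  have expansion: "(norm (p + t *\<^sub>R (z - p) - w))\<^sup>2
      = (norm (p - w))\<^sup>2 + 2 * t * inner (p - w) (z - p) + t\<^sup>2 * (norm (z - p))\<^sup>2" for t
  proof -
    have "p + t *\<^sub>R (z - p) - w = (p - w) + t *\<^sub>R (z - p)" by (simp add: algebra_simps)
    hence "(norm (p + t *\<^sub>R (z - p) - w))\<^sup>2 = (norm ((p - w) + t *\<^sub>R (z - p)))\<^sup>2"
      by (simp only:)
    thus ?thesis unfolding norm_add_square by (simp add: power_mult_distrib)
  qed
  show ?thesis unfolding p_def[symmetric]
  proof (rule convex_composite_min_first_order[OF convex hp[folded p_def] hz,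
        where \<Phi> = "\<lambda>z. 1 / (2 * \<gamma>) * (norm (z - w))\<^sup>2" and K = "(norm (z - p))\<^sup>2 / (2 * \<gamma>)"])
    show "ereal (1 / (2 * \<gamma>) * (norm (p - w))\<^sup>2) + h p
        \<le> ereal (1 / (2 * \<gamma>) * (norm (y - w))\<^sup>2) + h y" for y
      using prox_minimises[OF \<gamma> proper closed minorant, of w y]
      unfolding p_def prox_objective_def by (simp add: add.commute)
    show "1 / (2 * \<gamma>) * (norm (p + t *\<^sub>R (z - p) - w))\<^sup>2
        \<le> 1 / (2 * \<gamma>) * (norm (p - w))\<^sup>2 + t * (1 / \<gamma> * inner (p - w) (z - p))
          + t\<^sup>2 * ((norm (z - p))\<^sup>2 / (2 * \<gamma>))" for t
      unfolding expansion using \<gamma> by (simp add: field_simps)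
  qed
qed

lemma sum_norm_square_shift:
  "(\<Sum>j\<in>A. (norm (y j + c))\<^sup>2)
     = (\<Sum>j\<in>A. (norm (y j))\<^sup>2) + 2 * inner (\<Sum>j\<in>A. y j) (c::'a::real_inner) + real (card A) * (norm c)\<^sup>2"
  by (simp add: norm_add_square sum.distrib inner_sum_left sum_distrib_left)

lemma sum_norm_square_centered:
  fixes y :: "'i \<Rightarrow> 'a::real_inner"
  assumes "finite A" "A \<noteq> {}"
  defines "ybar \<equiv> (1 / real (card A)) *\<^sub>R (\<Sum>j\<in>A. y j)"
  shows "(\<Sum>j\<in>A. (norm (y j - ybar))\<^sup>2) = (\<Sum>j\<in>A. (norm (y j))\<^sup>2) - real (card A) * (norm ybar)\<^sup>2"
proof -
  have sum_y: "(\<Sum>j\<in>A. y j) = real (card A) *\<^sub>R ybar" using assms by (simp add: ybar_def)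
  have "(\<Sum>j\<in>A. (norm (y j - ybar))\<^sup>2) = (\<Sum>j\<in>A. (norm (y j + - ybar))\<^sup>2)" by simp
  also have "\<dots> = (\<Sum>j\<in>A. (norm (y j))\<^sup>2) - real (card A) * (norm ybar)\<^sup>2"
    unfolding sum_norm_square_shift sum_y by (simp add: power2_norm_eq_inner)
  finally show ?thesis .
qed

lemma norm_diff_square_le:
  "(norm (p - q))\<^sup>2 \<le> 3 * (norm p)\<^sup>2 + 3 / 2 * (norm (q::'a::real_inner))\<^sup>2"
proof -
  have "0 \<le> (norm (2 *\<^sub>R p + q))\<^sup>2" by simp
  hence "0 \<le> 4 * (norm p)\<^sup>2 + 4 * inner p q + (norm q)\<^sup>2"
    unfolding norm_add_square by (simp add: power_mult_distrib)
  moreover have "(norm (p - q))\<^sup>2 = (norm p)\<^sup>2 - 2 * inner p q + (norm q)\<^sup>2"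
    using norm_add_square[of p "- q"] by simp
  ultimately show ?thesis by linarith
qed

lemma inner_le_weighted_young:
  assumes "\<mu> > 0"
  shows "inner a u \<le> ((norm a)\<^sup>2 + \<mu>\<^sup>2 * (norm (u::'a::real_inner))\<^sup>2) / (2 * \<mu>)"
proof -
  have "0 \<le> (norm (a - \<mu> *\<^sub>R u))\<^sup>2" by simp
  also have "\<dots> = (norm a)\<^sup>2 - 2 * \<mu> * inner a u + \<mu>\<^sup>2 * (norm u)\<^sup>2"
    using norm_add_square[of a "- (\<mu> *\<^sub>R u)"] by (simp add: power_mult_distrib)
  finally show ?thesis using assms by (simp add: field_simps)
qed

lemma saga_estimator_variance:
  fixes a b :: "'i \<Rightarrow> 'a::real_inner"
  assumes A: "finite A" "A \<noteq> {}"
  defines "abar \<equiv> (1 / real (card A)) *\<^sub>R (\<Sum>j\<in>A. a j)"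
    and "bbar \<equiv> (1 / real (card A)) *\<^sub>R (\<Sum>j\<in>A. b j)"
  shows "(\<Sum>j\<in>A. (norm (a j - b j + bbar))\<^sup>2)
    \<le> 3 * (\<Sum>j\<in>A. (norm (a j))\<^sup>2) + 3 / 2 * (\<Sum>j\<in>A. (norm (b j))\<^sup>2) - 2 * real (card A) * (norm abar)\<^sup>2"
proof -
  define P where "P j = (a j - abar) - (b j - bbar)" for j
  have "(\<Sum>j\<in>A. a j) = real (card A) *\<^sub>R abar" "(\<Sum>j\<in>A. b j) = real (card A) *\<^sub>R bbar"
    using A by (simp_all add: abar_def bbar_def)
  hence sum_P: "(\<Sum>j\<in>A. P j) = 0" unfolding P_def by (simp add: sum_subtractf sum_constant_scaleR)
  have "(\<Sum>j\<in>A. (norm (a j - b j + bbar))\<^sup>2) = (\<Sum>j\<in>A. (norm (P j + abar))\<^sup>2)"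
    unfolding P_def by (simp add: algebra_simps)
  also have "\<dots> = (\<Sum>j\<in>A. (norm (P j))\<^sup>2) + real (card A) * (norm abar)\<^sup>2"
    unfolding sum_norm_square_shift sum_P by simp
  also have "(\<Sum>j\<in>A. (norm (P j))\<^sup>2)
      \<le> 3 * (\<Sum>j\<in>A. (norm (a j - abar))\<^sup>2) + 3 / 2 * (\<Sum>j\<in>A. (norm (b j - bbar))\<^sup>2)"
    unfolding P_def sum_distrib_left sum.distrib[symmetric] by (intro sum_mono norm_diff_square_le)
  also have "(\<Sum>j\<in>A. (norm (b j - bbar))\<^sup>2) \<le> (\<Sum>j\<in>A. (norm (b j))\<^sup>2)"
    using sum_norm_square_centered[OF A, of b] by (simp add: bbar_def)
  finally show ?thesis
    using sum_norm_square_centered[OF A, of a] by (simp add: abar_def)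
qed

text \<open>If <e - d, d> \<ge> 0 then |d| \<le> |e|; this is how firm non-expansiveness of the
  proximal map is turned into a distance bound.\<close>
lemma norm_square_le_of_inner_nonneg:
  fixes d e :: "'a::real_inner"
  assumes "inner (e - d) d \<ge> 0"
  shows "(norm d)\<^sup>2 \<le> (norm e)\<^sup>2"
proof -
  have "(norm e)\<^sup>2 = (norm (d + (e - d)))\<^sup>2" by simp
  also have "\<dots> = (norm d)\<^sup>2 + 2 * inner (e - d) d + (norm (e - d))\<^sup>2"
    unfolding norm_add_square by (simp add: inner_commute)
  finally show ?thesis using assms by simp
qed

lemma index_seqs_Suc:
  "index_seqs n (Suc k) = (\<lambda>(js, j). js @ [j]) ` (index_seqs n k \<times> {..<n})"
proof
  show "index_seqs n (Suc k) \<subseteq> (\<lambda>(js, j). js @ [j]) ` (index_seqs n k \<times> {..<n})"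
  proof
    fix js assume "js \<in> index_seqs n (Suc k)"
    hence len: "length js = Suc k" and set: "set js \<subseteq> {..<n}" unfolding index_seqs_def by auto
    then obtain j js' where "js = js' @ [j]" "length js' = k" by (metis length_Suc_conv_rev)
    thus "js \<in> (\<lambda>(js, j). js @ [j]) ` (index_seqs n k \<times> {..<n})"
      using set unfolding index_seqs_def by (auto intro!: image_eqI[of _ _ "(js', j)"])
  qed
qed (auto simp: index_seqs_def)

lemma sum_index_seqs_Suc:
  "(\<Sum>js\<in>index_seqs n (Suc k). X js) = (\<Sum>js\<in>index_seqs n k. \<Sum>j<n. X (js @ [j]))"
proof -
  have "inj_on (\<lambda>(js, j). js @ [j]) (index_seqs n k \<times> {..<n})" by (auto simp: inj_on_def)
  hence "(\<Sum>js\<in>index_seqs n (Suc k). X js)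
      = (\<Sum>p\<in>index_seqs n k \<times> {..<n}. X ((\<lambda>(js, j). js @ [j]) p))"
    unfolding index_seqs_Suc by (rule sum.reindex[unfolded comp_def])
  thus ?thesis by (simp add: sum.cartesian_product case_prod_beta)
qed

lemma expect_seq_mono:
  "(\<And>js. X js \<le> Y js) \<Longrightarrow> expect_seq n k X \<le> expect_seq n k Y"
  unfolding expect_seq_def by (intro divide_right_mono sum_mono) auto

lemma expect_seq_contraction:
  fixes T :: "'s \<Rightarrow> nat \<Rightarrow> 's" and V :: "'s \<Rightarrow> real"
  assumes n: "n > 0" and rho: "\<rho> \<ge> 0"
    and step: "\<And>s. (\<Sum>j<n. V (T s j)) \<le> real n * \<rho> * V s"
  shows "expect_seq n k (\<lambda>js. V (foldl T s0 js)) \<le> \<rho> ^ k * V s0"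
proof (induction k)
  case 0
  have "index_seqs n 0 = {[]}" unfolding index_seqs_def by auto
  thus ?case unfolding expect_seq_def by simp
next
  case (Suc k)
  have "(\<Sum>js\<in>index_seqs n (Suc k). V (foldl T s0 js))
      = (\<Sum>js\<in>index_seqs n k. \<Sum>j<n. V (T (foldl T s0 js) j))"
    unfolding sum_index_seqs_Suc by simp
  also have "\<dots> \<le> (\<Sum>js\<in>index_seqs n k. real n * \<rho> * V (foldl T s0 js))"
    by (intro sum_mono step)
  finally have "expect_seq n (Suc k) (\<lambda>js. V (foldl T s0 js))
      \<le> real n * \<rho> * (\<Sum>js\<in>index_seqs n k. V (foldl T s0 js)) / real n ^ Suc k"
    unfolding expect_seq_def by (simp add: sum_distrib_left divide_right_mono)
  also have "\<dots> = \<rho> * expect_seq n k (\<lambda>js. V (foldl T s0 js))"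
    unfolding expect_seq_def using n by (simp add: field_simps)
  also have "\<dots> \<le> \<rho> * (\<rho> ^ k * V s0)" using Suc rho by (simp add: mult_left_mono)
  finally show ?case by simp
qed

text \<open>The setting of the theorem: n strongly convex L-smooth components f_i, a proper closed
  convex h, and a minimiser xs of F = (1/n) sum_i f_i + h.\<close>
locale saga_setting =
  fixes n :: nat and f :: "nat \<Rightarrow> 'a::euclidean_space \<Rightarrow> real" and f' :: "nat \<Rightarrow> 'a \<Rightarrow> 'a"
    and h :: "'a \<Rightarrow> ereal" and L \<mu> :: real and xs :: 'a
  assumes n_pos: "n \<ge> 1"
    and mu_pos: "\<mu> > 0" and L_pos: "L > 0"
    and deriv: "\<And>i x. i < n \<Longrightarrow> (f i has_derivative (\<lambda>v. inner (f' i x) v)) (at x)"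
    and lip: "\<And>i x y. i < n \<Longrightarrow> norm (f' i x - f' i y) \<le> L * norm (x - y)"
    and strong: "\<And>i. i < n \<Longrightarrow> strongly_convex_grad \<mu> (f i) (f' i)"
    and h_proper: "proper_fun h" and h_closed: "closed_fun h" and h_convex: "convex_fun h"
    and xs_min: "\<And>x. ereal ((1 / real n) * (\<Sum>i<n. f i xs)) + h xs
                       \<le> ereal ((1 / real n) * (\<Sum>i<n. f i x)) + h x"
begin

definition \<gamma> :: real where "\<gamma> = 1 / (3 * L)"
definition grad_opt :: 'a where "grad_opt = (1 / real n) *\<^sub>R (\<Sum>i<n. f' i xs)"
definition breg :: "nat \<Rightarrow> 'a \<Rightarrow> real" where
  "breg i y = f i y - f i xs - inner (f' i xs) (y - xs)"
definition breg_sum :: "(nat \<Rightarrow> 'a) \<Rightarrow> real" where "breg_sum \<phi> = (\<Sum>i<n. breg i (\<phi> i))"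

lemma n_real_pos: "real n > 0" using n_pos by simp
lemma gamma_pos: "\<gamma> > 0" unfolding \<gamma>_def using L_pos by simp
lemma gamma_L: "3 * \<gamma> * L = 1" unfolding \<gamma>_def using L_pos by simp

lemma strong_convex_ineq:
  "i < n \<Longrightarrow> f i y \<ge> f i x + inner (f' i x) (y - x) + \<mu> / 2 * (norm (y - x))\<^sup>2"
  using strong unfolding strongly_convex_grad_def by blast

lemma smooth_ineq:
  "i < n \<Longrightarrow> f i y \<le> f i x + inner (f' i x) (y - x) + L / 2 * (norm (y - x))\<^sup>2"
  by (rule smooth_upper_bound[OF deriv lip])

text \<open>The strong convexity modulus cannot exceed the smoothness constant (test both
  inequalities on a unit vector).\<close>
lemma mu_le_L: "\<mu> \<le> L"
proof -
  obtain e :: 'a where e: "e \<in> Basis" using nonempty_Basis by blast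
  hence ne: "norm e = 1" by simp
  have i: "0 < n" using n_pos by simp
  have "\<mu> \<le> inner (f' 0 e - f' 0 0) e"
    using strong_convex_ineq[OF i, of 0 e] strong_convex_ineq[OF i, of e 0] ne
    by (simp add: inner_diff_left)
  also have "\<dots> \<le> norm (f' 0 e - f' 0 0) * norm e" by (rule norm_cauchy_schwarz)
  also have "\<dots> \<le> L" using lip[OF i, of e 0] ne by simp
  finally show ?thesis .
qed

lemma gamma_mu: "\<gamma> * \<mu> \<le> 1 / 3"
  using mult_left_mono[OF mu_le_L less_imp_le[OF gamma_pos]] gamma_L by simp

lemma gradient_inequality:
  "i < n \<Longrightarrow> inner (f' i x - f' i xs) (x - xs) \<ge> (norm (f' i x - f' i xs))\<^sup>2 / (2 * L)
           + (1 - \<mu> / L) * breg i x + \<mu> / 2 * (norm (x - xs))\<^sup>2"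
  unfolding breg_def
  by (rule strongly_convex_gradient_inequality[OF mu_pos mu_le_L strong_convex_ineq smooth_ineq])

lemma gradient_diff_le_breg: "i < n \<Longrightarrow> (norm (f' i y - f' i xs))\<^sup>2 \<le> 2 * L * breg i y"
proof -
  assume i: "i < n"
  have "f i y \<ge> f i x + inner (f' i x) (y - x)" for x y
  proof -
    have "0 \<le> \<mu> / 2 * (norm (y - x))\<^sup>2" using mu_pos by simp
    thus ?thesis using strong_convex_ineq[OF i, where x=x and y=y] by linarith
  qed
  from smooth_convex_gradient_gap[OF L_pos this smooth_ineq[OF i]]
  have "f i y \<ge> f i xs + inner (f' i xs) (y - xs) + (norm (f' i y - f' i xs))\<^sup>2 / (2 * L)" .
  thus ?thesis unfolding breg_def using L_pos by (simp add: field_simps)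
qed

lemma breg_nonneg: "i < n \<Longrightarrow> breg i y \<ge> 0"
proof -
  assume "i < n"
  hence "0 \<le> 2 * L * breg i y"
    using gradient_diff_le_breg[of i y] zero_le_power2[of "norm (f' i y - f' i xs)"] by linarith
  thus ?thesis using L_pos by (simp add: zero_le_mult_iff)
qed

lemma breg_sum_nonneg: "breg_sum \<phi> \<ge> 0"
  unfolding breg_sum_def by (rule sum_nonneg) (simp add: breg_nonneg)

lemma breg_le_monotonicity_gap:
  "i < n \<Longrightarrow> breg i x \<le> inner (f' i x - f' i xs) (x - xs) - \<mu> / 2 * (norm (x - xs))\<^sup>2"
  using strong_convex_ineq[where i=i and x=x and y=xs] unfolding breg_def
  by (simp add: inner_diff_left inner_diff_right norm_minus_commute algebra_simps)

definition h_opt :: real where "h_opt = real_of_ereal (h xs)"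

lemma h_opt: "h xs = ereal h_opt"
proof -
  obtain z r where hz: "h z = ereal r" using h_proper unfolding proper_fun_def by (metis ereal_cases)
  have "h xs \<noteq> \<infinity>" using xs_min[of z] hz by auto
  moreover have "h xs \<noteq> -\<infinity>" using h_proper unfolding proper_fun_def by auto
  ultimately show ?thesis unfolding h_opt_def by (cases "h xs") auto
qed

text \<open>First-order optimality of xs: - grad f(xs) is a subgradient of h at xs.  The smooth
  part satisfies the expansion required by the first-order lemma by the descent lemma.\<close>
lemma optimality_condition:
  assumes hz: "h z = ereal r"
  shows "r \<ge> h_opt - inner grad_opt (z - xs)"
proof (rule convex_composite_min_first_order[OF h_convex h_opt hz xs_min,
      where K = "L / 2 * (norm (z - xs))\<^sup>2"])
  fix t :: real assume t: "0 < t" "t \<le> 1"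
  have "f i (xs + t *\<^sub>R (z - xs))
      \<le> f i xs + t * inner (f' i xs) (z - xs) + t\<^sup>2 * (L / 2 * (norm (z - xs))\<^sup>2)" if "i < n" for i
    using smooth_ineq[OF that, of "xs + t *\<^sub>R (z - xs)" xs] t by (simp add: power_mult_distrib mult.left_commute)
  hence "(\<Sum>i<n. f i (xs + t *\<^sub>R (z - xs)))
      \<le> (\<Sum>i<n. f i xs + t * inner (f' i xs) (z - xs) + t\<^sup>2 * (L / 2 * (norm (z - xs))\<^sup>2))"
    by (intro sum_mono) auto
  also have "\<dots> = (\<Sum>i<n. f i xs) + t * inner (\<Sum>i<n. f' i xs) (z - xs)
      + real n * (t\<^sup>2 * (L / 2 * (norm (z - xs))\<^sup>2))"
    by (simp add: sum.distrib sum_distrib_left inner_sum_left)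
  finally show "1 / real n * (\<Sum>i<n. f i (xs + t *\<^sub>R (z - xs)))
      \<le> 1 / real n * (\<Sum>i<n. f i xs) + t * inner grad_opt (z - xs) + t\<^sup>2 * (L / 2 * (norm (z - xs))\<^sup>2)"
    using n_real_pos unfolding grad_opt_def by (simp add: field_simps)
qed

text \<open>Consequently h has an affine minorant, which makes the proximal map well defined.\<close>
lemma affine_minorant: "ereal ((h_opt + inner grad_opt xs) + inner (- grad_opt) z) \<le> h z"
proof (cases "h z")
  case (real r)
  thus ?thesis using optimality_condition[OF real] by (simp add: inner_diff_right)
next
  case MInf thus ?thesis using h_proper unfolding proper_fun_def by auto
qed simp

text \<open>xs is a fixed point of the forward-backward map, and the prox step is non-expansive
  towards it: |prox(w) - xs| \<le> |w - (xs - gamma grad f(xs))|.\<close>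
lemma prox_step_nonexpansive:
  "(norm (prox h \<gamma> w - xs))\<^sup>2 \<le> (norm (w - (xs - \<gamma> *\<^sub>R grad_opt)))\<^sup>2"
proof -
  define p where "p = prox h \<gamma> w"
  obtain hp where hp: "h p = ereal hp"
    using prox_finite[OF gamma_pos h_proper h_closed affine_minorant] unfolding p_def by blast
  have "h_opt \<ge> hp - (1 / \<gamma>) * inner (p - w) (xs - p)"
    using prox_variational_inequality[OF gamma_pos h_proper h_closed h_convex affine_minorant
        hp[unfolded p_def] h_opt] unfolding p_def .
  moreover have "hp \<ge> h_opt - inner grad_opt (p - xs)" by (rule optimality_condition[OF hp])
  ultimately have "0 \<le> \<gamma> * ((1 / \<gamma>) * inner (p - w) (xs - p) + inner grad_opt (p - xs))"
    using gamma_pos by simp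
  also have "\<dots> = inner ((w - (xs - \<gamma> *\<^sub>R grad_opt)) - (p - xs)) (p - xs)"
    using gamma_pos by (simp add: inner_diff_left inner_diff_right inner_commute algebra_simps)
  finally show ?thesis unfolding p_def by (rule norm_square_le_of_inner_nonneg)
qed

definition grad_gap :: "nat \<Rightarrow> 'a \<Rightarrow> 'a" where "grad_gap j y = f' j y - f' j xs"

definition mean_vec :: "(nat \<Rightarrow> 'a) \<Rightarrow> 'a" where "mean_vec v = (1 / real n) *\<^sub>R (\<Sum>i<n. v i)"

lemma sum_eq_n_mean: "(\<Sum>i<n. v i) = real n *\<^sub>R mean_vec v"
  using n_real_pos unfolding mean_vec_def by simp

lemma saga_step_eq:
  "saga_step n f' h \<gamma> (x, \<phi>) j =
     (prox h \<gamma> (x - \<gamma> *\<^sub>R (f' j x - f' j (\<phi> j) + mean_vec (\<lambda>i. f' i (\<phi> i)))), \<phi>(j := x))"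
  unfolding saga_step_def mean_vec_def Let_def by simp

text \<open>Distance part of one SAGA step, summed over the n possible indices: by
  non-expansiveness each new iterate is at most as far from xs as the forward step
  u - gamma e_j, where u = x - xs and e_j is the SAGA estimator error; expanding the squares,
  the estimator errors e_j average to the mean of the a_j = grad_gap j x.\<close>
lemma prox_steps_distance:
  fixes x :: 'a and \<phi> :: "nat \<Rightarrow> 'a"
  defines "a \<equiv> \<lambda>j. grad_gap j x" and "b \<equiv> \<lambda>j. grad_gap j (\<phi> j)"
  shows "(\<Sum>j<n. (norm (fst (saga_step n f' h \<gamma> (x, \<phi>) j) - xs))\<^sup>2)
    \<le> \<gamma>\<^sup>2 * (\<Sum>j<n. (norm (a j - b j + mean_vec b))\<^sup>2) - 2 * \<gamma> * (\<Sum>j<n. inner (a j) (x - xs))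
      + real n * (norm (x - xs))\<^sup>2"
proof -
  define u where "u = x - xs"
  define e where "e j = a j - b j + mean_vec b" for j
  have "mean_vec (\<lambda>i. f' i (\<phi> i)) = mean_vec b + grad_opt"
    unfolding mean_vec_def grad_opt_def b_def grad_gap_def by (simp add: sum_subtractf algebra_simps)
  hence forward: "x - \<gamma> *\<^sub>R (f' j x - f' j (\<phi> j) + mean_vec (\<lambda>i. f' i (\<phi> i))) - (xs - \<gamma> *\<^sub>R grad_opt)
      = - \<gamma> *\<^sub>R e j + u" for j
    unfolding e_def u_def a_def b_def grad_gap_def by (simp add: algebra_simps)
  have sum_e: "(\<Sum>j<n. e j) = (\<Sum>j<n. a j)"
    unfolding e_def by (simp add: sum.distrib sum_subtractf sum_eq_n_mean[of b] sum_constant_scaleR)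
  have "(\<Sum>j<n. (norm (fst (saga_step n f' h \<gamma> (x, \<phi>) j) - xs))\<^sup>2) \<le> (\<Sum>j<n. (norm (- \<gamma> *\<^sub>R e j + u))\<^sup>2)"
    unfolding saga_step_eq fst_conv by (intro sum_mono) (metis prox_step_nonexpansive forward)
  also have "\<dots> = \<gamma>\<^sup>2 * (\<Sum>j<n. (norm (e j))\<^sup>2) - 2 * \<gamma> * inner (\<Sum>j<n. a j) u + real n * (norm u)\<^sup>2"
    unfolding sum_norm_square_shift
    by (simp add: power_mult_distrib sum_distrib_left sum_negf flip: scaleR_sum_right sum_e)
  finally show ?thesis unfolding e_def u_def by (simp add: inner_sum_left)
qed

lemma sum_gradient_inequality:
  "(\<Sum>j<n. inner (grad_gap j x) (x - xs))
     \<ge> (\<Sum>j<n. (norm (grad_gap j x))\<^sup>2) / (2 * L) + (1 - \<mu> / L) * (\<Sum>j<n. breg j x)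
       + real n * (\<mu> / 2 * (norm (x - xs))\<^sup>2)"
proof -
  have "(\<Sum>j<n. (norm (grad_gap j x))\<^sup>2 / (2 * L) + (1 - \<mu> / L) * breg j x + \<mu> / 2 * (norm (x - xs))\<^sup>2)
      \<le> (\<Sum>j<n. inner (grad_gap j x) (x - xs))"
    unfolding grad_gap_def by (intro sum_mono gradient_inequality) simp
  thus ?thesis by (simp add: sum.distrib sum_divide_distrib sum_distrib_left)
qed

text \<open>The mean gradient gap at x dominates the total divergence: by strong convexity and
  Young's inequality, n |mean(a)|^2 \<ge> 2 mu sum_j D_j(x).\<close>
lemma mean_grad_gap_lower: "real n * (norm (mean_vec (\<lambda>j. grad_gap j x)))\<^sup>2 \<ge> 2 * \<mu> * (\<Sum>j<n. breg j x)"
proof -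
  define abar where "abar = mean_vec (\<lambda>j. grad_gap j x)"
  define U where "U = (norm (x - xs))\<^sup>2"
  have "(\<Sum>j<n. breg j x) \<le> (\<Sum>j<n. inner (grad_gap j x) (x - xs) - \<mu> / 2 * U)"
    unfolding U_def grad_gap_def by (intro sum_mono breg_le_monotonicity_gap) simp
  also have "\<dots> = real n * inner abar (x - xs) - real n * (\<mu> / 2 * U)"
    unfolding abar_def
    by (simp add: sum_subtractf sum_eq_n_mean[of "\<lambda>j. grad_gap j x"] flip: inner_sum_left)
  also have "\<dots> \<le> real n * (((norm abar)\<^sup>2 + \<mu>\<^sup>2 * U) / (2 * \<mu>)) - real n * (\<mu> / 2 * U)"
    unfolding U_def
    using mult_left_mono[OF inner_le_weighted_young[OF mu_pos, of abar "x - xs"], of "real n"]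
    by simp
  also have "\<dots> = real n * (norm abar)\<^sup>2 / (2 * \<mu>)"
    using mu_pos by (simp add: field_simps power2_eq_square)
  finally show ?thesis unfolding abar_def using mu_pos by (simp add: field_simps)
qed

lemma sum_grad_gap_le_breg_sum: "(\<Sum>j<n. (norm (grad_gap j (\<phi> j)))\<^sup>2) \<le> 2 * L * breg_sum \<phi>"
  unfolding breg_sum_def grad_gap_def sum_distrib_left
  by (intro sum_mono gradient_diff_le_breg) simp

lemma sum_breg_sum_update:
  "(\<Sum>j<n. breg_sum (\<phi>(j := x))) = real n * breg_sum \<phi> - breg_sum \<phi> + (\<Sum>j<n. breg j x)"
proof -
  have "breg_sum (\<phi>(j := x)) = breg_sum \<phi> + (breg j x - breg j (\<phi> j))" if "j < n" for j
  proof -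
    have "breg_sum (\<phi>(j := x)) = (\<Sum>i<n. breg i (\<phi> i) + (if i = j then breg j x - breg j (\<phi> j) else 0))"
      unfolding breg_sum_def by (rule sum.cong) auto
    thus ?thesis unfolding breg_sum_def using that by (simp add: sum.distrib)
  qed
  hence "(\<Sum>j<n. breg_sum (\<phi>(j := x))) = (\<Sum>j<n. breg_sum \<phi> + (breg j x - breg j (\<phi> j)))"
    by (intro sum.cong) auto
  thus ?thesis unfolding breg_sum_def by (simp add: sum.distrib sum_subtractf)
qed

definition lyap_weight :: real where "lyap_weight = 2 * real n * \<gamma> * (1 - \<gamma> * \<mu>)"
definition rate :: real where "rate = 1 - min (1 / (4 * real n)) (\<mu> / (3 * L))"
definition lyap :: "'a \<times> (nat \<Rightarrow> 'a) \<Rightarrow> real" where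
  "lyap st = (norm (fst st - xs))\<^sup>2 + lyap_weight / real n * breg_sum (snd st)"

lemma lyap_weight_nonneg: "lyap_weight \<ge> 0"
  unfolding lyap_weight_def using gamma_pos gamma_mu n_real_pos by simp

lemma rate_nonneg: "rate \<ge> 0"
proof -
  have "min (1 / (4 * real n)) (\<mu> / (3 * L)) \<le> 1 / (4 * real n)" by simp
  also have "\<dots> \<le> 1" using n_pos by (simp add: field_simps)
  finally show ?thesis unfolding rate_def by simp
qed

text \<open>The two coefficient conditions that make T contract at rate rho.\<close>
lemma rate_distance_coeff: "1 - \<gamma> * \<mu> \<le> rate"
  unfolding rate_def \<gamma>_def by simp

lemma rate_breg_coeff: "\<gamma> + lyap_weight - lyap_weight / real n \<le> rate * lyap_weight"
proof -
  define B where "B = (1 - 1 / (4 * real n)) * lyap_weight"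
  define C where "C = 3 / 2 * \<gamma> * (1 - \<gamma> * \<mu>)"
  have "B \<le> rate * lyap_weight"
    unfolding rate_def B_def using lyap_weight_nonneg by (intro mult_right_mono) auto
  moreover have "B - (lyap_weight - lyap_weight / real n) = C"
    unfolding B_def C_def lyap_weight_def using n_real_pos by (simp add: field_simps)
  moreover have "\<gamma> \<le> C"
    unfolding C_def using mult_left_mono[of "2 / 3" "1 - \<gamma> * \<mu>" "3 / 2 * \<gamma>"] gamma_pos gamma_mu by simp
  ultimately show ?thesis by linarith
qed

text \<open>The scalar bookkeeping of one step: combining the distance bound, the variance bound
  and the three gradient estimates, the terms in sum_j D_j(x) cancel exactly for
  gamma = 1/(3L), leaving a bound in |x - xs|^2 and sum_i D_i(phi_i) only.\<close>
lemma one_step_arithmetic: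
  fixes Dist E SA SD Sp SQa SQb Na U :: real
  assumes dist: "Dist \<le> \<gamma>\<^sup>2 * E - 2 * \<gamma> * SA + real n * U"
    and var: "E \<le> 3 * SQa + 3 / 2 * SQb - 2 * real n * Na"
    and grad: "SA \<ge> SQa / (2 * L) + (1 - \<mu> / L) * SD + real n * (\<mu> / 2 * U)"
    and mean: "real n * Na \<ge> 2 * \<mu> * SD"
    and stored: "SQb \<le> 2 * L * Sp"
  shows "Dist + lyap_weight / real n * (real n * Sp - Sp + SD)
    \<le> real n * (1 - \<gamma> * \<mu>) * U + (\<gamma> + lyap_weight - lyap_weight / real n) * Sp"
proof -
  have SQa_L: "SQa / (2 * L) = 3 / 2 * \<gamma> * SQa"
    unfolding \<gamma>_def using L_pos by simp
  have mu_L: "\<mu> / L = 3 * \<gamma> * \<mu>"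
    unfolding \<gamma>_def using L_pos by simp
  have var': "\<gamma>\<^sup>2 * E \<le> 3 * (\<gamma>\<^sup>2 * SQa) + 3 / 2 * (\<gamma>\<^sup>2 * SQb) - 2 * (\<gamma>\<^sup>2 * (real n * Na))"
    using mult_left_mono[OF var, of "\<gamma>\<^sup>2"] by (simp add: algebra_simps)
  have grad': "2 * (\<gamma> * SA) \<ge> 3 * (\<gamma>\<^sup>2 * SQa) + 2 * (\<gamma> * SD) - 6 * (\<gamma>\<^sup>2 * (\<mu> * SD))
      + \<gamma> * \<mu> * (real n * U)"
  proof -
    have "2 * \<gamma> * (SQa / (2 * L) + (1 - \<mu> / L) * SD + real n * (\<mu> / 2 * U))
        = 3 * (\<gamma>\<^sup>2 * SQa) + 2 * (\<gamma> * SD) - 6 * (\<gamma>\<^sup>2 * (\<mu> * SD)) + \<gamma> * \<mu> * (real n * U)"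
      unfolding SQa_L mu_L by (simp add: algebra_simps power2_eq_square)
    moreover have "2 * \<gamma> * SA \<ge> 2 * \<gamma> * (SQa / (2 * L) + (1 - \<mu> / L) * SD + real n * (\<mu> / 2 * U))"
      using grad gamma_pos by (simp add: mult_left_mono)
    ultimately show ?thesis by simp
  qed
  have mean': "\<gamma>\<^sup>2 * (real n * Na) \<ge> 2 * (\<gamma>\<^sup>2 * (\<mu> * SD))"
    using mult_left_mono[OF mean, of "\<gamma>\<^sup>2"] by (simp add: algebra_simps)
  have stored': "3 / 2 * (\<gamma>\<^sup>2 * SQb) \<le> \<gamma> * Sp"
  proof -
    have "3 / 2 * (\<gamma>\<^sup>2 * SQb) \<le> 3 / 2 * (\<gamma>\<^sup>2 * (2 * L * Sp))"
      using mult_left_mono[OF stored, of "3 / 2 * \<gamma>\<^sup>2"] by simp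
    also have "\<dots> = \<gamma> * Sp * (3 * \<gamma> * L)" by (simp add: power2_eq_square algebra_simps)
    finally show ?thesis using gamma_L by simp
  qed
  have "Dist \<le> \<gamma> * Sp - 2 * (\<gamma> * SD) + 2 * (\<gamma>\<^sup>2 * (\<mu> * SD)) + real n * U - \<gamma> * \<mu> * (real n * U)"
    using dist var' grad' mean' stored' by linarith
  moreover have "lyap_weight / real n * (real n * Sp - Sp + SD)
      = lyap_weight * Sp - lyap_weight / real n * Sp + 2 * (\<gamma> * SD) - 2 * (\<gamma>\<^sup>2 * (\<mu> * SD))"
    unfolding lyap_weight_def using n_real_pos by (simp add: field_simps power2_eq_square)
  moreover have "real n * (1 - \<gamma> * \<mu>) * U + (\<gamma> + lyap_weight - lyap_weight / real n) * Sp
      = real n * U - \<gamma> * \<mu> * (real n * U) + \<gamma> * Sp + lyap_weight * Sp - lyap_weight / real n * Sp"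
    by (simp add: algebra_simps)
  ultimately show ?thesis by linarith
qed

lemma lyapunov_contraction:
  "(\<Sum>j<n. lyap (saga_step n f' h \<gamma> (x, \<phi>) j)) \<le> real n * rate * lyap (x, \<phi>)"
proof -
  let ?a = "\<lambda>j. grad_gap j x" and ?b = "\<lambda>j. grad_gap j (\<phi> j)"
  let ?Dist = "\<Sum>j<n. (norm (fst (saga_step n f' h \<gamma> (x, \<phi>) j) - xs))\<^sup>2"
  let ?U = "(norm (x - xs))\<^sup>2" and ?Sp = "breg_sum \<phi>"
  have "(\<Sum>j<n. lyap (saga_step n f' h \<gamma> (x, \<phi>) j))
      = ?Dist + lyap_weight / real n * (real n * ?Sp - ?Sp + (\<Sum>j<n. breg j x))"
    unfolding lyap_def sum.distrib sum_breg_sum_update[symmetric] sum_distrib_left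
    by (simp add: saga_step_eq)
  also have "\<dots> \<le> real n * (1 - \<gamma> * \<mu>) * ?U + (\<gamma> + lyap_weight - lyap_weight / real n) * ?Sp"
  proof (rule one_step_arithmetic[OF prox_steps_distance _ sum_gradient_inequality
        mean_grad_gap_lower sum_grad_gap_le_breg_sum])
    show "(\<Sum>j<n. (norm (?a j - ?b j + mean_vec ?b))\<^sup>2)
        \<le> 3 * (\<Sum>j<n. (norm (?a j))\<^sup>2) + 3 / 2 * (\<Sum>j<n. (norm (?b j))\<^sup>2)
          - 2 * real n * (norm (mean_vec ?a))\<^sup>2"
      using saga_estimator_variance[of "{..<n}" ?a ?b] n_pos unfolding mean_vec_def
      by (simp add: lessThan_empty_iff)
  qed
  also have "\<dots> \<le> real n * rate * ?U + rate * lyap_weight * ?Sp"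
    using mult_right_mono[OF rate_distance_coeff, of "real n * ?U"]
      mult_right_mono[OF rate_breg_coeff breg_sum_nonneg[of \<phi>]] n_real_pos
    by (simp add: algebra_simps)
  also have "\<dots> = real n * rate * lyap (x, \<phi>)"
    unfolding lyap_def using n_real_pos by (simp add: field_simps)
  finally show ?thesis .
qed

lemma dist_le_lyap: "(norm (fst st - xs))\<^sup>2 \<le> lyap st"
  unfolding lyap_def using lyap_weight_nonneg breg_sum_nonneg n_real_pos by simp

text \<open>At the start all stored points equal x0, so the divergence term is the gap of f at x0
  and c/n \<le> 2 gamma = 2/(3L).\<close>
lemma lyap_initial:
  "lyap (x0, \<lambda>_. x0) \<le> (norm (x0 - xs))\<^sup>2 + 2 * real n / (3 * L) *
     ((1 / real n) * (\<Sum>i<n. f i x0) - inner ((1 / real n) *\<^sub>R (\<Sum>i<n. f' i xs)) (x0 - xs)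
       - (1 / real n) * (\<Sum>i<n. f i xs))"
proof -
  have gap: "(1 / real n) * (\<Sum>i<n. f i x0) - inner ((1 / real n) *\<^sub>R (\<Sum>i<n. f' i xs)) (x0 - xs)
      - (1 / real n) * (\<Sum>i<n. f i xs) = breg_sum (\<lambda>_. x0) / real n"
    unfolding breg_sum_def breg_def using n_real_pos
    by (simp add: sum_subtractf sum.distrib inner_sum_left field_simps)
  have "lyap_weight \<le> 2 * real n * \<gamma>"
    unfolding lyap_weight_def using n_real_pos gamma_pos mu_pos by simp
  hence "lyap_weight * (breg_sum (\<lambda>_. x0) / real n) \<le> 2 * real n * \<gamma> * (breg_sum (\<lambda>_. x0) / real n)"
    using breg_sum_nonneg n_real_pos by (intro mult_right_mono) simp_all
  thus ?thesis unfolding lyap_def gap \<gamma>_def by simp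
qed

lemma saga_iter_eq:
  "saga_iter n f' h (1 / (3 * L)) x0 js = fst (foldl (saga_step n f' h \<gamma>) (x0, \<lambda>_. x0) js)"
  unfolding saga_iter_def \<gamma>_def ..

theorem linear_convergence:
  "expect_seq n k (\<lambda>js. (norm (saga_iter n f' h (1 / (3 * L)) x0 js - xs))\<^sup>2)
     \<le> (1 - min (1 / (4 * real n)) (\<mu> / (3 * L))) ^ k *
       ((norm (x0 - xs))\<^sup>2 + 2 * real n / (3 * L) *
         ((1 / real n) * (\<Sum>i<n. f i x0) - inner ((1 / real n) *\<^sub>R (\<Sum>i<n. f' i xs)) (x0 - xs)
           - (1 / real n) * (\<Sum>i<n. f i xs)))"
proof -
  let ?state = "foldl (saga_step n f' h \<gamma>) (x0, \<lambda>_. x0)"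
  have "expect_seq n k (\<lambda>js. (norm (saga_iter n f' h (1 / (3 * L)) x0 js - xs))\<^sup>2)
      \<le> expect_seq n k (\<lambda>js. lyap (?state js))"
    unfolding saga_iter_eq by (intro expect_seq_mono dist_le_lyap)
  also have "\<dots> \<le> rate ^ k * lyap (x0, \<lambda>_. x0)"
  proof (rule expect_seq_contraction[OF _ rate_nonneg])
    show "(\<Sum>j<n. lyap (saga_step n f' h \<gamma> s j)) \<le> real n * rate * lyap s" for s
      using lyapunov_contraction[of "fst s" "snd s"] by simp
  qed (use n_pos in simp)
  also have "\<dots> \<le> rate ^ k * ((norm (x0 - xs))\<^sup>2 + 2 * real n / (3 * L) *
      ((1 / real n) * (\<Sum>i<n. f i x0) - inner ((1 / real n) *\<^sub>R (\<Sum>i<n. f' i xs)) (x0 - xs)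
        - (1 / real n) * (\<Sum>i<n. f i xs)))"
    using rate_nonneg by (intro mult_left_mono lyap_initial) simp
  finally show ?thesis unfolding rate_def .
qed

end

theorem mainTheorem6:
  fixes n :: nat and f :: "nat \<Rightarrow> 'a::euclidean_space \<Rightarrow> real" and f' :: "nat \<Rightarrow> 'a \<Rightarrow> 'a"
    and h :: "'a \<Rightarrow> ereal" and L \<mu> :: real and x0 xs :: 'a
  assumes n_pos: "n \<ge> 1"
    and mu_pos: "\<mu> > 0" and L_pos: "L > 0"
    and deriv: "\<And>i x. i < n \<Longrightarrow> (f i has_derivative (\<lambda>v. inner (f' i x) v)) (at x)"
    and cvx: "\<And>i. i < n \<Longrightarrow> convex_on UNIV (f i)"
    and lip: "\<And>i x y. i < n \<Longrightarrow> norm (f' i x - f' i y) \<le> L * norm (x - y)"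
    and strong: "\<And>i. i < n \<Longrightarrow> strongly_convex_grad \<mu> (f i) (f' i)"
    and h_proper: "proper_fun h" and h_closed: "closed_fun h" and h_convex: "convex_fun h"
    and xs_min: "\<And>x. ereal ((1 / real n) * (\<Sum>i<n. f i xs)) + h xs
                       \<le> ereal ((1 / real n) * (\<Sum>i<n. f i x)) + h x"
  shows "\<And>k. expect_seq n k (\<lambda>js. (norm (saga_iter n f' h (1 / (3 * L)) x0 js - xs))\<^sup>2)
           \<le> (1 - min (1 / (4 * real n)) (\<mu> / (3 * L))) ^ k *
             ((norm (x0 - xs))\<^sup>2 + 2 * real n / (3 * L) *
               ((1 / real n) * (\<Sum>i<n. f i x0)
                 - inner ((1 / real n) *\<^sub>R (\<Sum>i<n. f' i xs)) (x0 - xs)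
                 - (1 / real n) * (\<Sum>i<n. f i xs)))"
proof -
  have "saga_setting n f f' h L \<mu> xs"
    unfolding saga_setting_def
    using n_pos mu_pos L_pos deriv lip strong h_proper h_closed h_convex xs_min by blast
  from saga_setting.linear_convergence[OF this] show "\<And>k. ?thesis k" .
qed

end
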